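(* For every $n\ge 1$ and every $2$-colouring of the edges of $Q_n$, there is a monochromatic geodesic of length $\lceil n/2\rceil$.
   Context: The hypercube $Q_n$ has vertex set $\{0,1\}^n$, two vertices adjacent iff they differ in exactly one coordinate; the direction of an edge is that coordinate. A path is a geodesic if no two of its edges have the same direction; length is the number of edges. A path is monochromatic if all its edges receive the same colour. *)

theory Defs
  imports Complex_Main
begin

text \<open>Hypercube Q_n: vertices are subsets of {0..<n} (identified with 0/1 vectors via
  indicator), two vertices adjacent iff their symmetric difference has exactly one element;
  that element is the direction of the edge. Edges are unordered pairs {A, B}.\<close>

definition hc_vertex :: "nat \<Rightarrow> nat set \<Rightarrow> bool" where
  "hc_vertex n A \<longleftrightarrow> A \<subseteq> {..<n}"

definition hc_adj :: "nat \<Rightarrow> nat set \<Rightarrow> nat set \<Rightarrow> bool" where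
  "hc_adj n A B \<longleftrightarrow> hc_vertex n A \<and> hc_vertex n B \<and> card ((A - B) \<union> (B - A)) = 1"

definition hc_dir :: "nat set \<Rightarrow> nat set \<Rightarrow> nat" where
  "hc_dir A B = the_elem ((A - B) \<union> (B - A))"

text \<open>A path given by its vertex list; its length is (length vs - 1) edges.\<close>
definition hc_path :: "nat \<Rightarrow> nat set list \<Rightarrow> bool" where
  "hc_path n vs \<longleftrightarrow> vs \<noteq> [] \<and> (\<forall>i. Suc i < length vs \<longrightarrow> hc_adj n (vs ! i) (vs ! Suc i))"

definition hc_geodesic :: "nat \<Rightarrow> nat set list \<Rightarrow> bool" where
  "hc_geodesic n vs \<longleftrightarrow> hc_path n vs \<and>
     inj_on (\<lambda>i. hc_dir (vs ! i) (vs ! Suc i)) {i. Suc i < length vs}"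

definition monochromatic :: "(nat set set \<Rightarrow> bool) \<Rightarrow> nat set list \<Rightarrow> bool" where
  "monochromatic c vs \<longleftrightarrow> (\<exists>col. \<forall>i. Suc i < length vs \<longrightarrow> c {vs ! i, vs ! Suc i} = col)"

end

theory Submission
  imports Defs
begin

text \<open>For a subcube spanned by a set D of directions, record at every vertex v and colour col
  the length g v col of some geodesic of colour col starting at v and using only directions in D.
  Adding a direction d pairs each vertex v with its neighbour v' across d; if the edge vv' has
  colour e, prefixing it to the e-geodesic from v' (which avoids d) gives an e-geodesic from v,
  and symmetrically. Since max a (b + 1) + max b (a + 1) \<ge> a + b + 2, the sum of g over the pair
  grows by at least 2. By induction the sum of g v True + g v False over Q_n is at least n 2^n,
  so some vertex has g v True + g v False \<ge> n, and one colour reaches \<lceil>n/2\<rceil>.\<close>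

definition hc_dirs :: "nat set list \<Rightarrow> nat list" where
  "hc_dirs vs = map2 hc_dir vs (tl vs)"

definition hc_edges :: "nat set list \<Rightarrow> nat set set list" where
  "hc_edges vs = map2 (\<lambda>u v. {u, v}) vs (tl vs)"

lemma hc_dirs_Cons_Cons [simp]: "hc_dirs (u # v # vs) = hc_dir u v # hc_dirs (v # vs)"
  by (simp add: hc_dirs_def)

lemma hc_edges_Cons_Cons [simp]: "hc_edges (u # v # vs) = {u, v} # hc_edges (v # vs)"
  by (simp add: hc_edges_def)

lemma hc_dirs_take: "hc_dirs (take k vs) = take (k - 1) (hc_dirs vs)"
  unfolding hc_dirs_def by (rule nth_equalityI) (auto simp: nth_tl)

lemma hc_edges_take: "hc_edges (take k vs) = take (k - 1) (hc_edges vs)"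
  unfolding hc_edges_def by (rule nth_equalityI) (auto simp: nth_tl)

lemma hc_path_Cons_Cons: "hc_path n (u # v # vs) \<longleftrightarrow> hc_adj n u v \<and> hc_path n (v # vs)"
  unfolding hc_path_def by (auto simp: less_Suc_eq_0_disj)

lemma hc_path_take: "hc_path n vs \<Longrightarrow> 0 < k \<Longrightarrow> hc_path n (take k vs)"
  by (auto simp: hc_path_def)

lemma hc_geodesic_iff: "hc_geodesic n vs \<longleftrightarrow> hc_path n vs \<and> distinct (hc_dirs vs)"
  unfolding hc_geodesic_def hc_dirs_def distinct_conv_nth inj_on_def
  by (auto simp: nth_tl) (metis One_nat_def Suc_eq_plus1 less_diff_conv)

lemma monochromatic_iff: "monochromatic c vs \<longleftrightarrow> (\<exists>col. \<forall>e\<in>set (hc_edges vs). c e = col)"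
  unfolding monochromatic_def hc_edges_def all_set_conv_all_nth
  by (simp add: nth_tl less_diff_conv)

definition mono_geodesic_from ::
    "nat \<Rightarrow> (nat set set \<Rightarrow> bool) \<Rightarrow> bool \<Rightarrow> nat set \<Rightarrow> nat set \<Rightarrow> nat \<Rightarrow> bool" where
  "mono_geodesic_from n c col D v L \<longleftrightarrow>
     (\<exists>vs. hc_geodesic n vs \<and> hd vs = v \<and> length vs = Suc L \<and>
        set (hc_dirs vs) \<subseteq> D \<and> (\<forall>e\<in>set (hc_edges vs). c e = col))"

lemma mono_geodesic_from_0: "mono_geodesic_from n c col D v 0"
  unfolding mono_geodesic_from_def
  by (rule exI[of _ "[v]"]) (simp add: hc_geodesic_iff hc_path_def hc_dirs_def hc_edges_def)

lemma mono_geodesic_from_mono: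
  "mono_geodesic_from n c col D v L \<Longrightarrow> D \<subseteq> D' \<Longrightarrow> mono_geodesic_from n c col D' v L"
  unfolding mono_geodesic_from_def by blast

lemma mono_geodesic_from_le:
  assumes "mono_geodesic_from n c col D v L" "L' \<le> L"
  shows "mono_geodesic_from n c col D v L'"
proof -
  obtain vs where vs: "hc_geodesic n vs" "hd vs = v" "length vs = Suc L"
      "set (hc_dirs vs) \<subseteq> D" "\<forall>e\<in>set (hc_edges vs). c e = col"
    using assms(1) unfolding mono_geodesic_from_def by blast
  have "hc_geodesic n (take (Suc L') vs)"
    using vs(1) by (simp add: hc_geodesic_iff hc_path_take hc_dirs_take)
  moreover have "set (hc_dirs (take (Suc L') vs)) \<subseteq> D"
    using vs(4) set_take_subset by (fastforce simp: hc_dirs_take)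
  moreover have "\<forall>e\<in>set (hc_edges (take (Suc L') vs)). c e = col"
    using vs(5) by (auto simp: hc_edges_take dest: in_set_takeD)
  ultimately show ?thesis
    unfolding mono_geodesic_from_def using vs(2,3) assms(2)
    by (intro exI[of _ "take (Suc L') vs"]) (auto simp: hd_take)
qed

lemma mono_geodesic_from_Cons:
  assumes "mono_geodesic_from n c col D w L" "hc_adj n u w" "hc_dir u w \<notin> D" "c {u, w} = col"
  shows "mono_geodesic_from n c col (insert (hc_dir u w) D) u (Suc L)"
proof -
  obtain vs where vs: "hc_geodesic n (w # vs)" "length vs = L"
      "set (hc_dirs (w # vs)) \<subseteq> D" "\<forall>e\<in>set (hc_edges (w # vs)). c e = col"
    using assms(1) unfolding mono_geodesic_from_def by (metis length_Suc_conv list.sel(1))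
  have "hc_geodesic n (u # w # vs)"
    using vs(1,3) assms(2,3) by (auto simp: hc_geodesic_iff hc_path_Cons_Cons)
  then show ?thesis
    unfolding mono_geodesic_from_def using vs(2-4) assms(4)
    by (intro exI[of _ "u # w # vs"]) auto
qed

lemma mono_geodesic_from_edge:
  assumes "mono_geodesic_from n c col D u a" "mono_geodesic_from n c col D w b"
    and "hc_adj n u w" "hc_dir u w \<notin> D"
  shows "mono_geodesic_from n c col (insert (hc_dir u w) D) u
           (if c {u, w} = col then max a (Suc b) else a)"
  using assms mono_geodesic_from_Cons[OF assms(2-4)]
  by (auto simp: max_def intro: mono_geodesic_from_mono)

definition hc_flip :: "nat \<Rightarrow> nat set \<Rightarrow> nat set" where
  "hc_flip d v = (if d \<in> v then v - {d} else insert d v)"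

lemma hc_flip_flip [simp]: "hc_flip d (hc_flip d v) = v"
  by (auto simp: hc_flip_def)

lemma hc_flip_sym_diff: "(v - hc_flip d v) \<union> (hc_flip d v - v) = {d}"
  by (auto simp: hc_flip_def)

lemma hc_adj_flip: "hc_vertex n v \<Longrightarrow> d < n \<Longrightarrow> hc_adj n v (hc_flip d v)"
  unfolding hc_adj_def hc_flip_sym_diff by (auto simp: hc_vertex_def hc_flip_def)

lemma hc_dir_flip [simp]: "hc_dir v (hc_flip d v) = d"
  unfolding hc_dir_def hc_flip_sym_diff by simp

lemma max_Suc_add_max_Suc: "a + b + 2 \<le> max a (Suc b) + max b (Suc (a :: nat))"
  by (simp add: max_def)

lemma sum_Pow_insert:
  assumes "finite A" "a \<notin> A"
  shows "(\<Sum>T\<in>Pow (insert a A). f T) = (\<Sum>T\<in>Pow A. f T + f (insert a T))"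
proof -
  have "inj_on (insert a) (Pow A)" using assms(2) by (auto simp: inj_on_def)
  moreover have "Pow A \<inter> insert a ` Pow A = {}" using assms(2) by auto
  ultimately show ?thesis
    using assms(1) by (simp add: Pow_insert sum.union_disjoint sum.reindex sum.distrib)
qed

lemma ex_ge_of_card_mult_le_sum:
  fixes f :: "'a \<Rightarrow> nat"
  assumes "finite A" "A \<noteq> {}" "card A * m \<le> sum f A"
  shows "\<exists>x\<in>A. m \<le> f x"
proof (rule ccontr)
  assume "\<not> ?thesis"
  then have "sum f A < card A * m"
    using sum_bounded_above_strict[of A f m] assms(1,2) by (simp add: card_gt_0_iff not_le)
  then show False using assms(3) by simp
qed

lemma nat_ceiling_half: "nat \<lceil>real n / 2\<rceil> = (n + 1) div 2"
proof -
  have "\<lceil>real n / 2\<rceil> = \<lceil>real_of_int (int n) / real_of_int 2\<rceil>" by simp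
  also have "\<dots> = (int n + 1) div 2" unfolding ceiling_divide_eq_div by presburger
  finally show ?thesis by linarith
qed

lemma mono_geodesic_lengths_add_direction:
  fixes h :: "nat set \<Rightarrow> bool \<Rightarrow> nat"
  assumes "finite D" "d < n" "d \<notin> D" "B \<union> insert d D \<subseteq> {..<n}" "d \<notin> B"
    and h: "\<forall>T\<in>Pow (insert d D). \<forall>col. mono_geodesic_from n c col D (B \<union> T) (h (B \<union> T) col)"
  shows "\<exists>g. (\<forall>T\<in>Pow (insert d D). \<forall>col.
              mono_geodesic_from n c col (insert d D) (B \<union> T) (g (B \<union> T) col)) \<and>
            (\<Sum>T\<in>Pow (insert d D). h (B \<union> T) True + h (B \<union> T) False) + 2 ^ Suc (card D)
              \<le> (\<Sum>T\<in>Pow (insert d D). g (B \<union> T) True + g (B \<union> T) False)"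
proof -
  define g where "g v col =
      (if c {v, hc_flip d v} = col then max (h v col) (Suc (h (hc_flip d v) col)) else h v col)"
    for v col
  define H where "H v = h v True + h v False" for v
  define G where "G v = g v True + g v False" for v
  have flip_subcube: "\<exists>T'\<in>Pow (insert d D). hc_flip d (B \<union> T) = B \<union> T'"
    if "T \<in> Pow (insert d D)" for T
  proof (cases "d \<in> T")
    case True
    then show ?thesis using that \<open>d \<notin> B\<close> by (intro bexI[of _ "T - {d}"]) (auto simp: hc_flip_def)
  next
    case False
    then show ?thesis using that \<open>d \<notin> B\<close> by (intro bexI[of _ "insert d T"]) (auto simp: hc_flip_def)
  qed
  have g_mono_geodesic: "mono_geodesic_from n c col (insert d D) (B \<union> T) (g (B \<union> T) col)"
    if T: "T \<in> Pow (insert d D)" for T col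
  proof -
    obtain T' where T': "T' \<in> Pow (insert d D)" "hc_flip d (B \<union> T) = B \<union> T'"
      using flip_subcube[OF T] by blast
    have "mono_geodesic_from n c col D (B \<union> T) (h (B \<union> T) col)"
      using h T by blast
    moreover have "mono_geodesic_from n c col D (hc_flip d (B \<union> T)) (h (hc_flip d (B \<union> T)) col)"
      using h T' by simp
    moreover have "hc_adj n (B \<union> T) (hc_flip d (B \<union> T))"
      using T assms(2,4) by (intro hc_adj_flip) (auto simp: hc_vertex_def)
    ultimately show ?thesis
      using mono_geodesic_from_edge \<open>d \<notin> D\<close> unfolding g_def by fastforce
  qed
  have pair_gain: "H v + H (hc_flip d v) + 2 \<le> G v + G (hc_flip d v)" for v
    using max_Suc_add_max_Suc[of "h v True" "h (hc_flip d v) True"]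
      max_Suc_add_max_Suc[of "h v False" "h (hc_flip d v) False"]
    unfolding G_def H_def g_def by (cases "c {v, hc_flip d v}") (auto simp: insert_commute)
  have flip_eq: "hc_flip d (B \<union> T) = B \<union> insert d T" if "T \<in> Pow D" for T
    using that assms(3,5) by (auto simp: hc_flip_def)
  have "(\<Sum>T\<in>Pow (insert d D). H (B \<union> T)) + 2 ^ Suc (card D)
      = (\<Sum>T\<in>Pow D. H (B \<union> T) + H (hc_flip d (B \<union> T)) + 2)"
    unfolding sum.distrib using assms(1,3) by (simp add: sum_Pow_insert flip_eq sum.distrib card_Pow)
  also have "\<dots> \<le> (\<Sum>T\<in>Pow D. G (B \<union> T) + G (hc_flip d (B \<union> T)))"
    by (rule sum_mono) (rule pair_gain)
  also have "\<dots> = (\<Sum>T\<in>Pow (insert d D). G (B \<union> T))"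
    using assms(1,3) by (simp add: sum_Pow_insert flip_eq)
  finally show ?thesis
    using g_mono_geodesic unfolding H_def G_def by blast
qed

lemma subcube_mono_geodesic_lengths:
  assumes "finite D" "B \<union> D \<subseteq> {..<n}" "B \<inter> D = {}"
  shows "\<exists>g. (\<forall>T\<in>Pow D. \<forall>col. mono_geodesic_from n c col D (B \<union> T) (g (B \<union> T) col)) \<and>
             card D * 2 ^ card D \<le> (\<Sum>T\<in>Pow D. g (B \<union> T) True + g (B \<union> T) False)"
  using assms
proof (induction D arbitrary: B rule: finite_induct)
  case empty
  show ?case by (auto intro: mono_geodesic_from_0)
next
  case (insert d D)
  obtain g0 where g0: "\<forall>T\<in>Pow D. \<forall>col. mono_geodesic_from n c col D (B \<union> T) (g0 (B \<union> T) col)"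
      "card D * 2 ^ card D \<le> (\<Sum>T\<in>Pow D. g0 (B \<union> T) True + g0 (B \<union> T) False)"
    using insert.IH[of B] insert.prems by auto
  obtain g1 where g1: "\<forall>T\<in>Pow D. \<forall>col.
        mono_geodesic_from n c col D (insert d B \<union> T) (g1 (insert d B \<union> T) col)"
      "card D * 2 ^ card D \<le> (\<Sum>T\<in>Pow D. g1 (insert d B \<union> T) True + g1 (insert d B \<union> T) False)"
    using insert.IH[of "insert d B"] insert.prems insert.hyps by auto
  define h where "h v = (if d \<in> v then g1 v else g0 v)" for v
  have dB: "d \<notin> B" and dn: "d < n" using insert.prems by auto
  have h_mono_geodesic: "\<forall>T\<in>Pow (insert d D). \<forall>col. mono_geodesic_from n c col D (B \<union> T) (h (B \<union> T) col)"
  proof (intro ballI allI)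
    fix T col assume T: "T \<in> Pow (insert d D)"
    show "mono_geodesic_from n c col D (B \<union> T) (h (B \<union> T) col)"
    proof (cases "d \<in> T")
      case True
      then have "B \<union> T = insert d B \<union> (T - {d})" by auto
      then show ?thesis using g1(1) T True by (auto simp: h_def)
    next
      case False
      then show ?thesis using g0(1) T dB by (auto simp: h_def)
    qed
  qed
  obtain g where g: "\<forall>T\<in>Pow (insert d D). \<forall>col.
        mono_geodesic_from n c col (insert d D) (B \<union> T) (g (B \<union> T) col)"
      "(\<Sum>T\<in>Pow (insert d D). h (B \<union> T) True + h (B \<union> T) False) + 2 ^ Suc (card D)
        \<le> (\<Sum>T\<in>Pow (insert d D). g (B \<union> T) True + g (B \<union> T) False)"
    using mono_geodesic_lengths_add_direction[OF insert.hyps(1) dn insert.hyps(2) insert.prems(1) dB h_mono_geodesic]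
    by blast
  have h0: "h (B \<union> T) = g0 (B \<union> T)" and h1: "h (insert d (B \<union> T)) = g1 (insert d (B \<union> T))"
    if "T \<in> Pow D" for T
    using that insert.hyps dB by (auto simp: h_def)
  have "(\<Sum>T\<in>Pow (insert d D). h (B \<union> T) True + h (B \<union> T) False)
      = (\<Sum>T\<in>Pow D. (g0 (B \<union> T) True + g0 (B \<union> T) False)
          + (g1 (insert d B \<union> T) True + g1 (insert d B \<union> T) False))"
    using insert.hyps by (auto simp: sum_Pow_insert h0 h1 intro!: sum.cong)
  then have "card (insert d D) * 2 ^ card (insert d D)
      \<le> (\<Sum>T\<in>Pow (insert d D). g (B \<union> T) True + g (B \<union> T) False)"
    using g(2) g0(2) g1(2) insert.hyps by (simp add: sum.distrib)
  then show ?case using g(1) by blast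
qed

theorem corollary10:
  fixes n :: nat and c :: "nat set set \<Rightarrow> bool"
  assumes "n \<ge> 1"
  shows "\<exists>vs. hc_geodesic n vs \<and> monochromatic c vs \<and>
           length vs = nat \<lceil>real n / 2\<rceil> + 1"
proof -
  obtain g where g: "\<forall>T\<in>Pow {..<n}. \<forall>col. mono_geodesic_from n c col {..<n} T (g T col)"
      "card (Pow {..<n}) * n \<le> (\<Sum>T\<in>Pow {..<n}. g T True + g T False)"
    using subcube_mono_geodesic_lengths[of "{..<n}" "{}" n c] by (auto simp: card_Pow mult.commute)
  then obtain T where T: "T \<in> Pow {..<n}" "n \<le> g T True + g T False"
    using ex_ge_of_card_mult_le_sum[OF _ _ g(2)] by auto
  moreover have "(n + 1) div 2 \<le> g T True \<or> (n + 1) div 2 \<le> g T False"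
    using T(2) by presburger
  ultimately obtain col where "mono_geodesic_from n c col {..<n} T ((n + 1) div 2)"
    using g(1) mono_geodesic_from_le by blast
  then show ?thesis
    unfolding mono_geodesic_from_def monochromatic_iff nat_ceiling_half by auto
qed

end
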